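(* Let $h:\mathbb{R}_{\geq0}\times\mathbb{R}^n\to\mathbb{R}_{\geq0}$ be continuous and $K\subset\mathbb{R}^n$ closed. Assume (i) $h$ is positive definite with respect to $K$ uniformly in $t$: for all $t\ge0$ and $x\in\mathbb{R}^n$, $h(t,x)=0$ if and only if $x\in K$; (ii) $t\mapsto h(t,x)$ is nonincreasing for each $x\in\mathbb{R}^n$. Then for every compact set $\mathcal{I}\subset\mathbb{R}^n$ with $\mathcal{I}\cap K=\emptyset$ there exists a continuous $g:\mathbb{R}_{\geq0}\times\mathcal{I}\to\mathbb{R}_{\geq0}$ such that (1) $g$ is of class $\mathcal{C}^1$ on $\mathbb{R}_{\geq0}\times\operatorname{int}(\mathcal{I})$; (2) $\tfrac12 h(t,x)\le g(t,x)\le 2h(t,x)$ for all $(t,x)\in\mathbb{R}_{\geq0}\times\mathcal{I}$; (3) $t\mapsto g(t,x)$ is nonincreasing for each $x\in\mathcal{I}$. *)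

theory Defs
  imports "HOL-Analysis.Analysis"
begin

definition C1_on :: "'a::euclidean_space set \<Rightarrow> ('a \<Rightarrow> real) \<Rightarrow> bool" where
  "C1_on S f \<longleftrightarrow>
     (\<exists>D :: 'a \<Rightarrow> ('a \<Rightarrow>\<^sub>L real).
        (\<forall>z\<in>S. (f has_derivative blinfun_apply (D z)) (at z within S)) \<and> continuous_on S D)"

end

theory Submission
  imports Defs
begin

(* Choose times 0 = t_0 < t_1 < ... tending to infinity so densely that h(t_(j+1), .) >= 3/4 h(t_j, .)
   on I; this is possible by uniform continuity of h on compact pieces [0, T] x I, where h is
   bounded away from 0. Stone-Weierstrass gives polynomials p_j with h(t_j, .) <= p_j <= 4/3 h(t_j, .)
   on I, and slightly rescaled targets make them nonincreasing in j. Blending p_j into p_(j+1) over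
   [t_j, t_(j+1)] with a C^1 step function yields a C^1 function g of (t, x) that is nonincreasing
   in t and lies between p_(j+1) and p_j there, hence, as h is nonincreasing in t, between
   h(t, .) / 2 and 2 h(t, .). *)

section \<open>\<open>C\<^sup>1\<close> functions on the whole space\<close>

lemma C1_on_subset:
  assumes "C1_on T f" "S \<subseteq> T"
  shows "C1_on S f"
proof -
  from assms(1) obtain D where "\<forall>z\<in>T. (f has_derivative blinfun_apply (D z)) (at z within T)"
    and "continuous_on T D"
    unfolding C1_on_def by blast
  with assms(2) show ?thesis
    unfolding C1_on_def by (blast intro: has_derivative_subset continuous_on_subset)
qed

lemma C1_on_UNIV_iff:
  "C1_on UNIV f \<longleftrightarrow>
     (\<exists>D. (\<forall>z. (f has_derivative blinfun_apply (D z)) (at z)) \<and> continuous_on UNIV D)"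
  by (simp add: C1_on_def)

lemma C1_on_UNIV_imp_continuous_on: "C1_on UNIV f \<Longrightarrow> continuous_on UNIV f"
  unfolding C1_on_UNIV_iff by (metis continuous_at_imp_continuous_on has_derivative_continuous)

lemma C1_on_UNIV_bounded_linear: "bounded_linear f \<Longrightarrow> C1_on UNIV f"
  unfolding C1_on_UNIV_iff
  by (intro exI[of _ "\<lambda>_. Blinfun f"])
     (auto simp: bounded_linear_Blinfun_apply bounded_linear_imp_has_derivative)

lemma C1_on_UNIV_const: "C1_on UNIV (\<lambda>z. c)"
  unfolding C1_on_UNIV_iff by (intro exI[of _ "\<lambda>_. 0"]) (auto simp: zero_blinfun.rep_eq)

lemma C1_on_UNIV_add:
  assumes "C1_on UNIV f" "C1_on UNIV g"
  shows "C1_on UNIV (\<lambda>z. f z + g z)"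
proof -
  from assms obtain D E where
    "\<And>z. (f has_derivative blinfun_apply (D z)) (at z)" "continuous_on UNIV D"
    "\<And>z. (g has_derivative blinfun_apply (E z)) (at z)" "continuous_on UNIV E"
    unfolding C1_on_UNIV_iff by blast
  then show ?thesis
    unfolding C1_on_UNIV_iff
    by (intro exI[of _ "\<lambda>z. D z + E z"])
       (auto intro!: derivative_eq_intros continuous_on_add simp: blinfun.add_left)
qed

lemma C1_on_UNIV_mult:
  assumes "C1_on UNIV f" "C1_on UNIV g"
  shows "C1_on UNIV (\<lambda>z. f z * g z)"
proof -
  from assms obtain D E where
    "\<And>z. (f has_derivative blinfun_apply (D z)) (at z)" "continuous_on UNIV D"
    "\<And>z. (g has_derivative blinfun_apply (E z)) (at z)" "continuous_on UNIV E"
    unfolding C1_on_UNIV_iff by blast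
  moreover have "continuous_on UNIV f" "continuous_on UNIV g"
    using assms by (simp_all add: C1_on_UNIV_imp_continuous_on)
  ultimately show ?thesis
    unfolding C1_on_UNIV_iff
    by (intro exI[of _ "\<lambda>z. f z *\<^sub>R E z + g z *\<^sub>R D z"])
       (auto intro!: derivative_eq_intros continuous_on_add continuous_on_scaleR
         simp: blinfun.add_left blinfun.scaleR_left algebra_simps)
qed

lemma C1_on_UNIV_diff:
  assumes "C1_on UNIV f" "C1_on UNIV g"
  shows "C1_on UNIV (\<lambda>z. f z - g z)"
  using C1_on_UNIV_add[OF assms(1) C1_on_UNIV_mult[OF C1_on_UNIV_const assms(2)], of "-1"]
  by simp

lemma C1_on_UNIV_sum:
  "(\<And>i. i \<in> A \<Longrightarrow> C1_on UNIV (f i)) \<Longrightarrow> C1_on UNIV (\<lambda>z. \<Sum>i\<in>A. f i z)"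
  by (induction A rule: infinite_finite_induct) (auto intro: C1_on_UNIV_const C1_on_UNIV_add)

lemma C1_on_UNIV_polynomial: "real_polynomial_function p \<Longrightarrow> C1_on UNIV p"
  by (induction rule: real_polynomial_function.induct)
     (auto intro: C1_on_UNIV_bounded_linear C1_on_UNIV_const C1_on_UNIV_add C1_on_UNIV_mult)

lemma C1_on_UNIV_compose_affine:
  assumes "C1_on UNIV f" and L: "bounded_linear L"
  shows "C1_on UNIV (\<lambda>z. f (L z + c))"
proof -
  from assms obtain D where D: "\<And>z. (f has_derivative blinfun_apply (D z)) (at z)"
    and D_cont: "continuous_on UNIV D"
    unfolding C1_on_UNIV_iff by blast
  have "((\<lambda>z. f (L z + c)) has_derivative blinfun_apply (D (L z + c) o\<^sub>L Blinfun L)) (at z)" for z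
  proof -
    have "blinfun_apply (D (L z + c) o\<^sub>L Blinfun L) = (\<lambda>y. D (L z + c) (L y))"
      by (rule ext) (simp add: bounded_linear_Blinfun_apply L)
    moreover have "((\<lambda>z. L z + c) has_derivative L) (at z)"
      using L by (simp add: bounded_linear_imp_has_derivative has_derivative_add_const)
    ultimately show ?thesis
      using has_derivative_compose[OF _ D] by (simp add: o_def)
  qed
  moreover have "continuous_on UNIV (\<lambda>z. D (L z + c) o\<^sub>L Blinfun L)"
    using L by (intro continuous_intros continuous_on_compose2[OF D_cont]) (auto intro: linear_continuous_on)
  ultimately show ?thesis
    unfolding C1_on_UNIV_iff by (intro exI[of _ "\<lambda>z. D (L z + c) o\<^sub>L Blinfun L"]) blast
qed

lemma C1_on_UNIV_local:
  assumes "\<And>z. \<exists>U F. open U \<and> z \<in> U \<and> C1_on UNIV F \<and> (\<forall>y\<in>U. f y = F y)"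
  shows "C1_on UNIV f"
proof -
  obtain U F where U: "\<And>z. open (U z)" "\<And>z. z \<in> U z" "\<And>z. C1_on UNIV (F z)"
    and f_eq: "\<And>z y. y \<in> U z \<Longrightarrow> f y = F z y"
    using assms by metis
  obtain DF where DF: "\<And>z y. (F z has_derivative blinfun_apply (DF z y)) (at y)"
    and DF_cont: "\<And>z. continuous_on UNIV (DF z)"
    using U(3) unfolding C1_on_UNIV_iff by metis
  have f_deriv: "(f has_derivative blinfun_apply (DF z y)) (at y)" if "y \<in> U z" for z y
    by (rule has_derivative_transform_within_open[OF DF U(1) that]) (simp add: f_eq)
  define D where "D y = DF y y" for y
  have D_eq: "D y = DF z y" if "y \<in> U z" for z y
    unfolding D_def blinfun_apply_inject[symmetric]
    using has_derivative_unique[OF f_deriv[OF U(2)] f_deriv[OF that]] .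
  have D_cont: "isCont D z" for z
  proof -
    have "eventually (\<lambda>y. D y = DF z y) (nhds z)"
      unfolding eventually_nhds using U(1,2) D_eq by blast
    moreover have "isCont (DF z) z"
      using DF_cont by (simp add: continuous_on_eq_continuous_at)
    ultimately show ?thesis
      by (simp add: isCont_cong)
  qed
  show ?thesis
    unfolding C1_on_UNIV_iff
  proof (intro exI conjI allI)
    show "(f has_derivative blinfun_apply (D z)) (at z)" for z
      unfolding D_def by (rule f_deriv[OF U(2)])
    show "continuous_on UNIV D"
      by (intro continuous_at_imp_continuous_on ballI D_cont)
  qed
qed


section \<open>A \<open>C\<^sup>1\<close> step function\<close>

lemma has_field_derivative_at_from_both_sides:
  fixes f :: "real \<Rightarrow> real"
  assumes "(f has_field_derivative D) (at x within {..x})"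
    and "(f has_field_derivative D) (at x within {x..})"
  shows "(f has_field_derivative D) (at x)"
proof -
  have "(f has_field_derivative D) (at x within {..x} \<union> {x..})"
    using assms unfolding has_field_derivative_def has_derivative_within by (simp add: Lim_within_Un)
  moreover have "{..x} \<union> {x..} = UNIV" by auto
  ultimately show ?thesis by simp
qed

definition smoothstep :: "real \<Rightarrow> real" where
  "smoothstep u = (if u \<le> 0 then 0 else if 1 \<le> u then 1 else 3 * u\<^sup>2 - 2 * u ^ 3)"

definition smoothstep' :: "real \<Rightarrow> real" where
  "smoothstep' u = (if u \<le> 0 then 0 else if 1 \<le> u then 0 else 6 * u - 6 * u\<^sup>2)"

lemma smoothstep_eq_0: "u \<le> 0 \<Longrightarrow> smoothstep u = 0"
  and smoothstep_eq_1: "1 \<le> u \<Longrightarrow> smoothstep u = 1"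
  by (simp_all add: smoothstep_def)

lemma smoothstep_has_real_derivative: "(smoothstep has_real_derivative smoothstep' u) (at u)"
proof -
  have poly: "((\<lambda>u. 3 * u\<^sup>2 - 2 * u ^ 3) has_real_derivative 6 * u - 6 * u\<^sup>2) (at u within S)"
    for u :: real and S
    by (auto intro!: derivative_eq_intros simp: power2_eq_square)
  consider "u < 0" | "u = 0" | "0 < u" "u < 1" | "u = 1" | "1 < u" by linarith
  then show ?thesis
  proof cases
    case 1
    show ?thesis
      by (rule has_field_derivative_transform_within_open[of "\<lambda>_. 0" _ _ "{..<0}"])
         (use 1 in \<open>auto simp: smoothstep_def smoothstep'_def\<close>)
  next
    case 2
    have "(smoothstep has_real_derivative 0) (at 0 within {..0})"
      by (rule has_field_derivative_transform_within[of "\<lambda>_. 0" _ _ _ 1])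
         (auto simp: smoothstep_def)
    moreover have "(smoothstep has_real_derivative 0) (at 0 within {0..})"
      by (rule has_field_derivative_transform_within[OF poly[of 0], of 1, simplified])
         (auto simp: smoothstep_def dist_real_def)
    ultimately show ?thesis
      using 2 by (simp add: has_field_derivative_at_from_both_sides smoothstep'_def)
  next
    case 3
    have "(smoothstep has_real_derivative 6 * u - 6 * u\<^sup>2) (at u)"
      by (rule has_field_derivative_transform_within_open[OF poly, of "{0<..<1}"])
         (use 3 in \<open>auto simp: smoothstep_def\<close>)
    with 3 show ?thesis
      by (simp add: smoothstep'_def)
  next
    case 4
    have "(smoothstep has_real_derivative 0) (at 1 within {..1})"
      by (rule has_field_derivative_transform_within[OF poly[of 1], of 1, simplified])
         (auto simp: smoothstep_def dist_real_def)
    moreover have "(smoothstep has_real_derivative 0) (at 1 within {1..})"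
      by (rule has_field_derivative_transform_within[of "\<lambda>_. 1" _ _ _ 1])
         (auto simp: smoothstep_def)
    ultimately show ?thesis
      using 4 by (simp add: has_field_derivative_at_from_both_sides smoothstep'_def)
  next
    case 5
    show ?thesis
      by (rule has_field_derivative_transform_within_open[of "\<lambda>_. 1" _ _ "{1<..}"])
         (use 5 in \<open>auto simp: smoothstep_def smoothstep'_def\<close>)
  qed
qed

lemma smoothstep'_nonneg: "0 \<le> smoothstep' u"
  by (auto simp: smoothstep'_def power2_eq_square mult_left_le_one_le)

lemma mono_smoothstep: "mono smoothstep"
  using smoothstep_has_real_derivative smoothstep'_nonneg
  by (intro monoI) (metis DERIV_nonneg_imp_nondecreasing)

lemma smoothstep_bounds: "0 \<le> smoothstep u" "smoothstep u \<le> 1"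
  using monoD[OF mono_smoothstep, of "min 0 u" u] monoD[OF mono_smoothstep, of u "max 1 u"]
  by (simp_all add: smoothstep_eq_0 smoothstep_eq_1)

lemma C1_on_UNIV_smoothstep: "C1_on UNIV smoothstep"
proof -
  have "continuous_on UNIV (\<lambda>u::real. 6 * max 0 (min 1 u) - 6 * (max 0 (min 1 u))\<^sup>2)"
    by (intro continuous_intros)
  also have "(\<lambda>u::real. 6 * max 0 (min 1 u) - 6 * (max 0 (min 1 u))\<^sup>2) = smoothstep'"
    by (auto simp: smoothstep'_def power2_eq_square)
  finally have "continuous_on UNIV smoothstep'" .
  then have "continuous_on UNIV (\<lambda>u. smoothstep' u *\<^sub>R id_blinfun)"
    by (auto intro!: continuous_intros)
  moreover have "(smoothstep has_derivative blinfun_apply (smoothstep' u *\<^sub>R id_blinfun)) (at u)" for u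
  proof -
    have "blinfun_apply (smoothstep' u *\<^sub>R id_blinfun) = (*) (smoothstep' u)"
      by (rule ext) (simp add: blinfun.scaleR_left)
    then show ?thesis
      using smoothstep_has_real_derivative[of u] by (simp add: has_field_derivative_def)
  qed
  ultimately show ?thesis
    unfolding C1_on_UNIV_iff by (intro exI[of _ "\<lambda>u. smoothstep' u *\<^sub>R id_blinfun"]) blast
qed


section \<open>Time grids\<close>

definition time_grid :: "(nat \<Rightarrow> real) \<Rightarrow> bool" where
  "time_grid tt \<longleftrightarrow> tt 0 = 0 \<and> strict_mono tt \<and> (\<forall>T. \<exists>j. T < tt j)"

lemma time_grid_less: "time_grid tt \<Longrightarrow> tt j < tt (Suc j)"
  by (simp add: time_grid_def strict_mono_Suc_iff)

lemma time_grid_mono: "time_grid tt \<Longrightarrow> i \<le> j \<Longrightarrow> tt i \<le> tt j"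
  by (simp add: time_grid_def strict_mono_less_eq)

lemma time_grid_nonneg: "time_grid tt \<Longrightarrow> 0 \<le> tt j"
  using time_grid_mono[of tt 0 j] by (simp add: time_grid_def)

lemma time_grid_interval:
  assumes "time_grid tt" "0 \<le> t"
  obtains k where "tt k \<le> t" "t < tt (Suc k)"
proof -
  obtain N where "t < tt N"
    using assms(1) by (auto simp: time_grid_def)
  then have "\<exists>k. tt k \<le> t \<and> t < tt (Suc k)"
  proof (induction N)
    case 0
    with assms show ?case by (simp add: time_grid_def)
  next
    case (Suc N)
    then show ?case by (cases "t < tt N") (auto simp: not_less)
  qed
  then show ?thesis
    using that by blast
qed

text \<open>The step taken from \<open>s\<close> is the admissible step for the interval \<open>[0, \<lceil>s\<rceil>]\<close>, made
  nonincreasing in \<open>\<lceil>s\<rceil>\<close>; so the grid cannot accumulate at a finite time.\<close>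
lemma exists_time_grid:
  fixes P :: "real \<Rightarrow> real \<Rightarrow> bool"
  assumes "\<And>T. \<exists>\<delta>>0. \<forall>s\<in>{0..T}. \<forall>d\<in>{0<..\<delta>}. P s (s + d)"
  shows "\<exists>tt. time_grid tt \<and> (\<forall>j. P (tt j) (tt (Suc j)))"
proof -
  have "\<forall>n::nat. \<exists>\<delta>>0. \<forall>s\<in>{0..real n}. \<forall>d\<in>{0<..\<delta>}. P s (s + d)"
    using assms by blast
  then obtain \<delta> where \<delta>_pos: "\<And>n. 0 < \<delta> n"
    and \<delta>_step: "\<And>n. \<forall>s\<in>{0..real n}. \<forall>d\<in>{0<..\<delta> n}. P s (s + d)"
    by metis
  define \<Delta> where "\<Delta> n = Min (\<delta> ` {..n})" for n
  have \<Delta>_pos: "0 < \<Delta> n" for n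
    by (simp add: \<Delta>_def \<delta>_pos)
  have \<Delta>_le: "\<Delta> n \<le> \<delta> n" for n
    by (simp add: \<Delta>_def)
  have \<Delta>_antimono: "\<Delta> n \<le> \<Delta> m" if "m \<le> n" for m n
    unfolding \<Delta>_def using that by (intro Min_antimono image_mono) auto
  define tt where "tt = rec_nat 0 (\<lambda>_ s. s + \<Delta> (nat \<lceil>s\<rceil>))"
  have tt_0: "tt 0 = 0" and tt_Suc: "tt (Suc j) = tt j + \<Delta> (nat \<lceil>tt j\<rceil>)" for j
    by (simp_all add: tt_def)
  have tt_nonneg: "0 \<le> tt j" for j
    by (induction j) (auto simp: tt_0 tt_Suc intro: add_nonneg_nonneg less_imp_le[OF \<Delta>_pos])
  have "strict_mono tt"
    by (rule strict_mono_Suc_iff[THEN iffD2]) (simp add: tt_Suc \<Delta>_pos)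
  moreover have "\<exists>j. T < tt j" for T
  proof (rule ccontr)
    assume "\<nexists>j. T < tt j"
    then have bounded: "tt j \<le> T" for j
      by (simp add: not_less)
    have lower: "real j * \<Delta> (nat \<lceil>T\<rceil>) \<le> tt j" for j
    proof (induction j)
      case (Suc j)
      have "\<Delta> (nat \<lceil>T\<rceil>) \<le> \<Delta> (nat \<lceil>tt j\<rceil>)"
        using bounded[of j] by (intro \<Delta>_antimono nat_mono ceiling_mono)
      with Suc show ?case
        by (simp add: tt_Suc algebra_simps)
    qed (simp add: tt_0)
    obtain j :: nat where "T < real j * \<Delta> (nat \<lceil>T\<rceil>)"
      using reals_Archimedean3[OF \<Delta>_pos] by blast
    then show False
      using lower[of j] bounded[of j] by linarith
  qed
  moreover have "P (tt j) (tt (Suc j))" for j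
    using \<delta>_step[of "nat \<lceil>tt j\<rceil>"] \<Delta>_pos[of "nat \<lceil>tt j\<rceil>"] \<Delta>_le[of "nat \<lceil>tt j\<rceil>"]
      tt_nonneg[of j] real_nat_ceiling_ge[of "tt j"]
    by (auto simp: tt_Suc)
  ultimately show ?thesis
    using tt_0 unfolding time_grid_def by blast
qed

lemma continuous_on_compact_pos_lower_bound:
  fixes f :: "'a::topological_space \<Rightarrow> real"
  assumes "compact S" "continuous_on S f" "\<And>x. x \<in> S \<Longrightarrow> 0 < f x"
  shows "\<exists>m>0. \<forall>x\<in>S. m \<le> f x"
proof (cases "S = {}")
  case False
  then obtain x0 where "x0 \<in> S" "\<And>x. x \<in> S \<Longrightarrow> f x0 \<le> f x"
    using compact_attains_inf[OF compact_continuous_image[OF assms(2,1)]] by auto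
  with assms(3) show ?thesis by blast
qed (auto intro: exI[of _ 1])

text \<open>Uniform continuity on \<open>[0, T + 1] \<times> I\<close> moves \<open>h\<close> by less than \<open>(1 - r)\<close> times
  its positive minimum there.\<close>
lemma uniform_ratio_step:
  fixes h :: "real \<Rightarrow> 'a::metric_space \<Rightarrow> real"
  assumes h_cont: "continuous_on ({0..} \<times> I) (\<lambda>(t, x). h t x)" and "compact I"
    and h_pos: "\<And>t x. 0 \<le> t \<Longrightarrow> x \<in> I \<Longrightarrow> 0 < h t x"
    and "r < 1"
  shows "\<exists>\<delta>>0. \<forall>s\<in>{0..T}. \<forall>d\<in>{0<..\<delta>}. \<forall>x\<in>I. r * h s x \<le> h (s + d) x"
proof -
  define S where "S = {0..T + 1} \<times> I"
  have "compact S"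
    unfolding S_def using \<open>compact I\<close> by (intro compact_Times) auto
  moreover have S_cont: "continuous_on S (\<lambda>(t, x). h t x)"
    using h_cont by (rule continuous_on_subset) (auto simp: S_def)
  moreover have "\<And>z. z \<in> S \<Longrightarrow> 0 < (\<lambda>(t, x). h t x) z"
    using h_pos by (auto simp: S_def)
  ultimately obtain m where m_pos: "0 < m" and m_le: "\<And>t x. (t, x) \<in> S \<Longrightarrow> m \<le> h t x"
    by (metis (no_types, lifting) case_prod_conv continuous_on_compact_pos_lower_bound)
  have "uniformly_continuous_on S (\<lambda>(t, x). h t x)"
    using S_cont \<open>compact S\<close> by (rule compact_uniformly_continuous)
  moreover have "0 < (1 - r) * m"
    using \<open>r < 1\<close> m_pos by simp
  ultimately obtain e where e_pos: "0 < e"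
    and e: "\<And>a b. a \<in> S \<Longrightarrow> b \<in> S \<Longrightarrow> dist b a < e \<Longrightarrow>
              dist ((\<lambda>(t, x). h t x) b) ((\<lambda>(t, x). h t x) a) < (1 - r) * m"
    unfolding uniformly_continuous_on_def by metis
  show ?thesis
  proof (intro exI[of _ "min 1 (e / 2)"] conjI ballI)
    fix s d x assume s: "s \<in> {0..T}" and d: "d \<in> {0<..min 1 (e / 2)}" and x: "x \<in> I"
    have "(s, x) \<in> S" "(s + d, x) \<in> S"
      using s d x by (auto simp: S_def)
    moreover have "dist (s + d, x) (s, x) < e"
      using d e_pos by (simp add: dist_Pair_Pair dist_real_def)
    ultimately have "\<bar>h (s + d) x - h s x\<bar> < (1 - r) * m"
      using e by (fastforce simp: dist_real_def)
    moreover have "(1 - r) * m \<le> (1 - r) * h s x"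
      using m_le[OF \<open>(s, x) \<in> S\<close>] \<open>r < 1\<close> by (intro mult_left_mono) simp_all
    ultimately show "r * h s x \<le> h (s + d) x"
      by (simp add: algebra_simps abs_less_iff)
  qed (use e_pos in auto)
qed


section \<open>Decreasing polynomial approximation\<close>

text \<open>Approximate \<open>c\<^sub>j f\<^sub>j\<close> with \<open>c\<^sub>j = 1 + \<epsilon> 2\<^sup>-\<^sup>j / 2\<close> to within \<open>\<epsilon> 2\<^sup>-\<^sup>j / 8\<close>
  times a lower bound of \<open>f\<^sub>j\<^sub>+\<^sub>1\<close>: the drop \<open>c\<^sub>j - c\<^sub>j\<^sub>+\<^sub>1\<close> of the scaling factors
  beats both approximation errors.\<close>
lemma decreasing_polynomial_sandwich:
  fixes f :: "nat \<Rightarrow> 'a::euclidean_space \<Rightarrow> real"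
  assumes "compact I" and f_cont: "\<And>j. continuous_on I (f j)"
    and f_pos: "\<And>j x. x \<in> I \<Longrightarrow> 0 < f j x"
    and f_dec: "\<And>j x. x \<in> I \<Longrightarrow> f (Suc j) x \<le> f j x"
    and "0 < \<epsilon>"
  obtains p where "\<And>j. real_polynomial_function (p j)"
    and "\<And>j x. x \<in> I \<Longrightarrow> f j x \<le> p j x"
    and "\<And>j x. x \<in> I \<Longrightarrow> p j x \<le> (1 + \<epsilon>) * f j x"
    and "\<And>j x. x \<in> I \<Longrightarrow> p (Suc j) x \<le> p j x"
proof -
  have "\<forall>j. \<exists>m>0. \<forall>x\<in>I. m \<le> f j x"
    using continuous_on_compact_pos_lower_bound[OF \<open>compact I\<close> f_cont f_pos] by blast
  then obtain m where m_pos: "\<And>j. 0 < m j" and m_le: "\<And>j x. x \<in> I \<Longrightarrow> m j \<le> f j x"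
    by metis
  define w where "w j = \<epsilon> * (1 / 2) ^ j" for j
  have w_pos: "0 < w j" and w_le: "w j \<le> \<epsilon>" and w_Suc: "w (Suc j) = w j / 2" for j
    using \<open>0 < \<epsilon>\<close> by (simp_all add: w_def power_le_one)
  have w_nonneg: "0 \<le> w j" for j
    using w_pos[of j] by simp
  define c where "c j = 1 + w j / 2" for j
  define e where "e j = w j / 8 * m (Suc j)" for j
  have "\<forall>j. \<exists>q. real_polynomial_function q \<and> (\<forall>x\<in>I. \<bar>c j * f j x - q x\<bar> < e j)"
  proof
    fix j
    have cont: "continuous_on I (\<lambda>x. c j * f j x)"
      by (intro continuous_intros f_cont)
    have "0 < e j"
      by (simp add: e_def w_pos m_pos)
    then obtain q where "polynomial_function q" "\<forall>x\<in>I. norm (c j * f j x - q x) < e j"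
      using Stone_Weierstrass_polynomial_function[OF \<open>compact I\<close> cont] by blast
    then show "\<exists>q. real_polynomial_function q \<and> (\<forall>x\<in>I. \<bar>c j * f j x - q x\<bar> < e j)"
      by (auto simp: real_polynomial_function_eq)
  qed
  then obtain p where p_poly: "\<And>j. real_polynomial_function (p j)"
    and p_approx: "\<And>j x. x \<in> I \<Longrightarrow> \<bar>c j * f j x - p j x\<bar> < e j"
    by metis
  have e_le: "e j \<le> w j / 8 * f (Suc j) x" if "x \<in> I" for j x
    unfolding e_def using m_le[OF that] by (intro mult_left_mono) (auto simp: w_nonneg)
  show ?thesis
  proof (rule that[OF p_poly])
    fix j x assume x: "x \<in> I"
    have "w j * f (Suc j) x \<le> w j * f j x"
      using f_dec[OF x] by (intro mult_left_mono w_nonneg)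
    moreover have "w j * f j x \<le> \<epsilon> * f j x"
      using w_le f_pos[OF x, of j] by (intro mult_right_mono) auto
    moreover have "0 \<le> w j * f (Suc j) x"
      using w_nonneg f_pos[OF x, of "Suc j"] by simp
    moreover note p_approx[OF x, of j] e_le[OF x, of j]
    ultimately show "f j x \<le> p j x" "p j x \<le> (1 + \<epsilon>) * f j x"
      by (auto simp: c_def algebra_simps abs_less_iff)
  next
    fix j x assume x: "x \<in> I"
    have "w j * f (Suc (Suc j)) x \<le> w j * f (Suc j) x" "w j * f (Suc j) x \<le> w j * f j x"
      using f_dec[OF x] by (auto intro: mult_left_mono w_nonneg)
    moreover have "0 \<le> w j * f (Suc j) x"
      using w_nonneg f_pos[OF x, of "Suc j"] by simp
    moreover note p_approx[OF x, of j] p_approx[OF x, of "Suc j"]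
      e_le[OF x, of j] e_le[OF x, of "Suc j"] f_dec[OF x, of j]
    ultimately show "p (Suc j) x \<le> p j x"
      by (simp add: c_def w_Suc algebra_simps abs_less_iff)
  qed
qed


section \<open>Interpolation along a time grid\<close>

definition grid_weight :: "(nat \<Rightarrow> real) \<Rightarrow> nat \<Rightarrow> real \<Rightarrow> real" where
  "grid_weight tt j t = smoothstep ((t - tt j) / (tt (Suc j) - tt j))"

text \<open>At each time only finitely many summands are nonzero; on \<open>[tt k, tt (k + 1)]\<close> the
  function blends \<open>p k\<close> into \<open>p (k + 1)\<close>.\<close>
definition grid_interpolation :: "(nat \<Rightarrow> real) \<Rightarrow> (nat \<Rightarrow> 'a \<Rightarrow> real) \<Rightarrow> real \<Rightarrow> 'a \<Rightarrow> real" where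
  "grid_interpolation tt p t x = p 0 x + (\<Sum>j. grid_weight tt j t * (p (Suc j) x - p j x))"

lemma grid_weight_eq_0: "time_grid tt \<Longrightarrow> t \<le> tt j \<Longrightarrow> grid_weight tt j t = 0"
  using time_grid_less[of tt j] by (simp add: grid_weight_def smoothstep_eq_0 divide_nonpos_pos)

lemma grid_weight_eq_1: "time_grid tt \<Longrightarrow> tt (Suc j) \<le> t \<Longrightarrow> grid_weight tt j t = 1"
  using time_grid_less[of tt j] by (simp add: grid_weight_def smoothstep_eq_1)

lemma grid_weight_bounds: "0 \<le> grid_weight tt j t" "grid_weight tt j t \<le> 1"
  by (simp_all add: grid_weight_def smoothstep_bounds)

lemma grid_weight_mono: "time_grid tt \<Longrightarrow> s \<le> t \<Longrightarrow> grid_weight tt j s \<le> grid_weight tt j t"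
  using time_grid_less[of tt j] unfolding grid_weight_def
  by (intro monoD[OF mono_smoothstep] divide_right_mono) auto

lemma grid_interpolation_eq_sum:
  assumes "time_grid tt" "t \<le> tt N"
  shows "grid_interpolation tt p t x = p 0 x + (\<Sum>j<N. grid_weight tt j t * (p (Suc j) x - p j x))"
proof -
  have "grid_weight tt j t = 0" if "j \<notin> {..<N}" for j
    using that assms time_grid_mono[OF assms(1), of N j] by (intro grid_weight_eq_0) auto
  then show ?thesis
    unfolding grid_interpolation_def by (subst suminf_finite[of "{..<N}"]) auto
qed

lemma grid_interpolation_on_interval:
  assumes "time_grid tt" "tt k \<le> t" "t \<le> tt (Suc k)"
  shows "grid_interpolation tt p t x = p k x + grid_weight tt k t * (p (Suc k) x - p k x)"
proof -
  have "grid_weight tt j t = 1" if "j < k" for j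
    using that by (intro grid_weight_eq_1[OF assms(1)] order_trans[OF time_grid_mono[OF assms(1)] assms(2)]) simp
  then have "(\<Sum>j<k. grid_weight tt j t * (p (Suc j) x - p j x)) = (\<Sum>j<k. p (Suc j) x - p j x)"
    by simp
  also have "\<dots> = p k x - p 0 x"
    by (rule sum_lessThan_telescope)
  finally show ?thesis
    using grid_interpolation_eq_sum[OF assms(1,3), of p x] by simp
qed

lemma grid_interpolation_between:
  assumes "time_grid tt" "tt k \<le> t" "t \<le> tt (Suc k)" "p (Suc k) x \<le> p k x"
  shows "p (Suc k) x \<le> grid_interpolation tt p t x" "grid_interpolation tt p t x \<le> p k x"
proof -
  have "0 \<le> (1 - grid_weight tt k t) * (p k x - p (Suc k) x)"
    using assms(4) grid_weight_bounds[of tt k t] by simp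
  then have "p (Suc k) x - p k x \<le> grid_weight tt k t * (p (Suc k) x - p k x)"
    by (simp add: algebra_simps)
  moreover have "grid_weight tt k t * (p (Suc k) x - p k x) \<le> 0"
    using assms(4) grid_weight_bounds[of tt k t] by (simp add: mult_nonneg_nonpos)
  ultimately show "p (Suc k) x \<le> grid_interpolation tt p t x" "grid_interpolation tt p t x \<le> p k x"
    using grid_interpolation_on_interval[OF assms(1-3), of p x] by linarith+
qed

lemma grid_interpolation_antimono:
  assumes "time_grid tt" "\<And>j. p (Suc j) x \<le> p j x" "s \<le> t"
  shows "grid_interpolation tt p t x \<le> grid_interpolation tt p s x"
proof -
  obtain N where "t < tt N"
    using assms(1) by (auto simp: time_grid_def)
  then have "grid_interpolation tt p r x = p 0 x + (\<Sum>j<N. grid_weight tt j r * (p (Suc j) x - p j x))"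
    if "r \<le> t" for r
    using that by (intro grid_interpolation_eq_sum[OF assms(1)]) simp
  moreover have "grid_weight tt j t * (p (Suc j) x - p j x) \<le> grid_weight tt j s * (p (Suc j) x - p j x)" for j
    using assms by (intro mult_right_mono_neg grid_weight_mono) auto
  ultimately show ?thesis
    using assms(3) by (simp add: sum_mono)
qed

lemma C1_on_UNIV_grid_interpolation:
  assumes "time_grid tt" "\<And>j. C1_on UNIV (p j)"
  shows "C1_on UNIV (\<lambda>(t, x). grid_interpolation tt p t x)"
proof (rule C1_on_UNIV_local)
  fix z :: "real \<times> 'a"
  obtain N where "fst z < tt N"
    using assms(1) by (auto simp: time_grid_def)
  define F where "F y = p 0 (snd y) + (\<Sum>j<N. grid_weight tt j (fst y) * (p (Suc j) (snd y) - p j (snd y)))"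
    for y :: "real \<times> 'a"
  have p_snd: "C1_on UNIV (\<lambda>y::real \<times> 'a. p j (snd y))" for j
    using C1_on_UNIV_compose_affine[OF assms(2) bounded_linear_snd, of j 0] by simp
  have weight: "C1_on UNIV (\<lambda>y::real \<times> 'a. grid_weight tt j (fst y))" for j
  proof -
    define d where "d = tt (Suc j) - tt j"
    have "bounded_linear (\<lambda>y::real \<times> 'a. fst y / d)"
      by (rule bounded_linear_compose[OF bounded_linear_divide bounded_linear_fst])
    from C1_on_UNIV_compose_affine[OF C1_on_UNIV_smoothstep this, of "- tt j / d"]
    show ?thesis
      by (simp add: grid_weight_def d_def diff_divide_distrib)
  qed
  have "C1_on UNIV F"
    unfolding F_def
    by (intro C1_on_UNIV_add C1_on_UNIV_sum C1_on_UNIV_mult C1_on_UNIV_diff p_snd weight)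
  moreover have "(\<lambda>(t, x). grid_interpolation tt p t x) y = F y" if "fst y < tt N" for y
    using grid_interpolation_eq_sum[OF assms(1) less_imp_le[OF that]] by (simp add: F_def case_prod_beta)
  moreover have "open {y :: real \<times> 'a. fst y < tt N}"
    by (intro open_Collect_less continuous_intros)
  ultimately show "\<exists>U F. open U \<and> z \<in> U \<and> C1_on UNIV F \<and> (\<forall>y\<in>U. (\<lambda>(t, x). grid_interpolation tt p t x) y = F y)"
    using \<open>fst z < tt N\<close> by blast
qed

lemma grid_interpolation_bounds:
  fixes f :: "real \<Rightarrow> real"
  assumes grid: "time_grid tt" and "0 \<le> t" "0 \<le> f t"
    and f_antimono: "\<And>s t. 0 \<le> s \<Longrightarrow> s \<le> t \<Longrightarrow> f t \<le> f s"
    and f_ratio: "\<And>j. 3/4 * f (tt j) \<le> f (tt (Suc j))"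
    and p_lower: "\<And>j. f (tt j) \<le> p j x" and p_upper: "\<And>j. p j x \<le> 4/3 * f (tt j)"
    and p_dec: "\<And>j. p (Suc j) x \<le> p j x"
  shows "f t / 2 \<le> grid_interpolation tt p t x" "grid_interpolation tt p t x \<le> 2 * f t"
proof -
  obtain k where k: "tt k \<le> t" "t < tt (Suc k)"
    using time_grid_interval[OF grid \<open>0 \<le> t\<close>] .
  have "f t \<le> f (tt k)"
    using f_antimono[OF time_grid_nonneg[OF grid] k(1)] .
  moreover have "f (tt (Suc k)) \<le> f t"
    using f_antimono[OF \<open>0 \<le> t\<close>] k(2) by simp
  moreover have "p (Suc k) x \<le> grid_interpolation tt p t x" "grid_interpolation tt p t x \<le> p k x"
    using grid_interpolation_between[OF grid k(1) less_imp_le[OF k(2)], of p x] p_dec[of k] by auto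
  ultimately show "f t / 2 \<le> grid_interpolation tt p t x" "grid_interpolation tt p t x \<le> 2 * f t"
    using f_ratio[of k] p_lower[of "Suc k"] p_upper[of k] \<open>0 \<le> f t\<close> by linarith+
qed

lemma C1_comparable_antimono:
  fixes h :: "real \<Rightarrow> 'a::euclidean_space \<Rightarrow> real"
  assumes I: "compact I" and h_cont: "continuous_on ({0..} \<times> I) (\<lambda>(t, x). h t x)"
    and h_pos: "\<And>t x. 0 \<le> t \<Longrightarrow> x \<in> I \<Longrightarrow> 0 < h t x"
    and h_antimono: "\<And>x s t. x \<in> I \<Longrightarrow> 0 \<le> s \<Longrightarrow> s \<le> t \<Longrightarrow> h t x \<le> h s x"
  obtains g where "C1_on UNIV (\<lambda>(t, x). g t x)"
    and "\<And>t x. 0 \<le> t \<Longrightarrow> x \<in> I \<Longrightarrow> h t x / 2 \<le> g t x \<and> g t x \<le> 2 * h t x"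
    and "\<And>x s t. x \<in> I \<Longrightarrow> s \<le> t \<Longrightarrow> g t x \<le> g s x"
proof -
  obtain tt where grid: "time_grid tt" and ratio: "\<And>j x. x \<in> I \<Longrightarrow> 3/4 * h (tt j) x \<le> h (tt (Suc j)) x"
    using exists_time_grid[of "\<lambda>s t. \<forall>x\<in>I. 3/4 * h s x \<le> h t x"]
      uniform_ratio_step[OF h_cont I h_pos, of "3/4"] by auto
  have slice_cont: "continuous_on I (h (tt j))" for j
  proof -
    have "(\<lambda>x. (tt j, x)) ` I \<subseteq> {0..} \<times> I"
      using time_grid_nonneg[OF grid, of j] by auto
    then show ?thesis
      using continuous_on_compose2[OF h_cont continuous_on_Pair[OF continuous_on_const continuous_on_id]]
      by simp
  qed
  have slice_pos: "\<And>j x. x \<in> I \<Longrightarrow> 0 < h (tt j) x"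
    using h_pos time_grid_nonneg[OF grid] by blast
  have slice_dec: "\<And>j x. x \<in> I \<Longrightarrow> h (tt (Suc j)) x \<le> h (tt j) x"
    using h_antimono time_grid_nonneg[OF grid] time_grid_mono[OF grid] by simp
  obtain p where p_poly: "\<And>j. real_polynomial_function (p j)"
    and p_lower: "\<And>j x. x \<in> I \<Longrightarrow> h (tt j) x \<le> p j x"
    and p_upper: "\<And>j x. x \<in> I \<Longrightarrow> p j x \<le> (1 + 1/3) * h (tt j) x"
    and p_dec: "\<And>j x. x \<in> I \<Longrightarrow> p (Suc j) x \<le> p j x"
    by (rule decreasing_polynomial_sandwich[where f = "\<lambda>j. h (tt j)" and \<epsilon> = "1/3",
          OF I slice_cont slice_pos slice_dec]) auto
  show thesis
  proof
    show "C1_on UNIV (\<lambda>(t, x). grid_interpolation tt p t x)"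
      using C1_on_UNIV_grid_interpolation[OF grid C1_on_UNIV_polynomial[OF p_poly]] .
    fix t :: real and x assume "0 \<le> t" "x \<in> I"
    then show "h t x / 2 \<le> grid_interpolation tt p t x \<and> grid_interpolation tt p t x \<le> 2 * h t x"
      using grid_interpolation_bounds[OF grid, of t "\<lambda>s. h s x" p x] h_pos h_antimono ratio
        p_lower p_upper p_dec by (auto simp: less_imp_le)
  next
    fix x and s t :: real assume "x \<in> I" "s \<le> t"
    then show "grid_interpolation tt p t x \<le> grid_interpolation tt p s x"
      using grid_interpolation_antimono[OF grid, of p x] p_dec by blast
  qed
qed

theorem lemma3:
  fixes h :: "real \<Rightarrow> 'a::euclidean_space \<Rightarrow> real" and K :: "'a set"
  assumes h_cont: "continuous_on ({0..} \<times> UNIV) (\<lambda>(t, x). h t x)"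
    and h_nonneg: "\<And>t x. t \<ge> 0 \<Longrightarrow> h t x \<ge> 0"
    and K_closed: "closed K"
    and h_posdef: "\<And>t x. t \<ge> 0 \<Longrightarrow> (h t x = 0 \<longleftrightarrow> x \<in> K)"
    and h_mono: "\<And>x s t. 0 \<le> s \<Longrightarrow> s \<le> t \<Longrightarrow> h t x \<le> h s x"
  shows "\<forall>I :: 'a set. compact I \<and> I \<inter> K = {} \<longrightarrow>
    (\<exists>g :: real \<Rightarrow> 'a \<Rightarrow> real.
        continuous_on ({0..} \<times> I) (\<lambda>(t, x). g t x)
      \<and> (\<forall>t\<ge>0. \<forall>x\<in>I. g t x \<ge> 0)
      \<and> C1_on ({0..} \<times> interior I) (\<lambda>(t, x). g t x)
      \<and> (\<forall>t\<ge>0. \<forall>x\<in>I. h t x / 2 \<le> g t x \<and> g t x \<le> 2 * h t x)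
      \<and> (\<forall>x\<in>I. \<forall>s t. 0 \<le> s \<and> s \<le> t \<longrightarrow> g t x \<le> g s x))"
proof (intro allI impI)
  fix I :: "'a set" assume "compact I \<and> I \<inter> K = {}"
  then have I: "compact I" and h_pos: "\<And>t x. 0 \<le> t \<Longrightarrow> x \<in> I \<Longrightarrow> 0 < h t x"
    using h_nonneg h_posdef by (auto simp: order_less_le)
  have hI_cont: "continuous_on ({0..} \<times> I) (\<lambda>(t, x). h t x)"
    using h_cont by (rule continuous_on_subset) auto
  have h_antimono: "\<And>x s t. x \<in> I \<Longrightarrow> 0 \<le> s \<Longrightarrow> s \<le> t \<Longrightarrow> h t x \<le> h s x"
    using h_mono by blast
  obtain g where g_C1: "C1_on UNIV (\<lambda>(t, x). g t x)"
    and g_bounds: "\<And>t x. 0 \<le> t \<Longrightarrow> x \<in> I \<Longrightarrow> h t x / 2 \<le> g t x \<and> g t x \<le> 2 * h t x"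
    and g_antimono: "\<And>x s t. x \<in> I \<Longrightarrow> s \<le> t \<Longrightarrow> g t x \<le> g s x"
    by (rule C1_comparable_antimono[OF I hI_cont h_pos h_antimono]) auto
  have "continuous_on ({0..} \<times> I) (\<lambda>(t, x). g t x)"
    using C1_on_UNIV_imp_continuous_on[OF g_C1] by (rule continuous_on_subset) simp
  moreover have "C1_on ({0..} \<times> interior I) (\<lambda>(t, x). g t x)"
    using g_C1 by (rule C1_on_subset) simp
  moreover have "0 \<le> g t x" if "0 \<le> t" "x \<in> I" for t x
    using g_bounds[OF that] h_nonneg[OF that(1), of x] by linarith
  ultimately show "\<exists>g. continuous_on ({0..} \<times> I) (\<lambda>(t, x). g t x)
      \<and> (\<forall>t\<ge>0. \<forall>x\<in>I. g t x \<ge> 0)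
      \<and> C1_on ({0..} \<times> interior I) (\<lambda>(t, x). g t x)
      \<and> (\<forall>t\<ge>0. \<forall>x\<in>I. h t x / 2 \<le> g t x \<and> g t x \<le> 2 * h t x)
      \<and> (\<forall>x\<in>I. \<forall>s t. 0 \<le> s \<and> s \<le> t \<longrightarrow> g t x \<le> g s x)"
    using g_bounds g_antimono by (intro exI[of _ g]) auto
qed

end
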